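(* Let $U_1,U_2,\dots$ be i.i.d. almost surely positive random variables distributed as $U$ with tail function $Q(x)=\mathbb{P}(U>x)$, and assume $\mathbb{E}[U^2]<\infty$ and that there exist $\beta\in(0,1/2)$ and $x_0>0$ in the interior of the support of $U$ such that $Q^{1/2-\beta}$ is convex on $[x_0,\infty)$. Let $V_N=\max(U_1,\dots,U_N)$. Then there exists a non-increasing deterministic function $\eta$ on $\mathbb{R}_+$ with $\lim_{y\to+\infty}\eta(y)=0$ such that $\lim_{N\to\infty}\mathbb{P}(B_N)=1$, where $B_N=\{V_N/\sqrt N\le \eta(N)\}$. *)

theory Defs
  imports "HOL-Probability.Probability"
begin

definition rv_support :: "'a measure \<Rightarrow> ('a \<Rightarrow> real) \<Rightarrow> real set" where
  "rv_support M X = {x. \<forall>e>0. measure M {\<omega> \<in> space M. X \<omega> \<in> ball x e} > 0}"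

end

theory Submission
  imports Defs
begin

text \<open>The truncated moment \<open>g(s) = E[U\<^sup>2; U > s]\<close>
  bounds \<open>s\<^sup>2 Q(s)\<close> and vanishes as \<open>s \<rightarrow> \<infinity>\<close>. Choosing
  \<open>\<eta>(N) = max (g(N^(1/4))^(1/4)) (N^(-1/4))\<close>, the union bound gives
  \<open>P(V\<^sub>N > \<eta>(N) \<surd>N) \<le> N Q(\<eta>(N) \<surd>N) \<le> g(N^(1/4)) / \<eta>(N)\<^sup>2 \<le> g(N^(1/4))^(1/2) \<rightarrow> 0\<close>.\<close>

definition tail_second_moment :: "'a measure \<Rightarrow> ('a \<Rightarrow> real) \<Rightarrow> real \<Rightarrow> real" where
  "tail_second_moment M X s = (\<integral>\<omega>. (X \<omega>)\<^sup>2 * indicator {\<omega> \<in> space M. X \<omega> > s} \<omega> \<partial>M)"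

lemma tail_second_moment_nonneg: "0 \<le> tail_second_moment M X s"
  unfolding tail_second_moment_def by (rule integral_nonneg_AE) auto

lemma integrable_tail_second_moment:
  fixes X :: "'a \<Rightarrow> real"
  assumes "X \<in> borel_measurable M" "integrable M (\<lambda>\<omega>. (X \<omega>)\<^sup>2)"
  shows "integrable M (\<lambda>\<omega>. (X \<omega>)\<^sup>2 * indicator {\<omega> \<in> space M. X \<omega> > s} \<omega>)"
  by (rule integrable_real_mult_indicator[OF _ assms(2)]) (use assms(1) in measurable)

lemma antimono_tail_second_moment:
  assumes "X \<in> borel_measurable M" "integrable M (\<lambda>\<omega>. (X \<omega>)\<^sup>2)"
  shows "antimono (tail_second_moment M X)"
proof (rule antimonoI)
  fix s t :: real assume "s \<le> t"
  then show "tail_second_moment M X t \<le> tail_second_moment M X s"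
    unfolding tail_second_moment_def
    by (intro integral_mono integrable_tail_second_moment assms) (auto split: split_indicator)
qed

lemma tendsto_tail_second_moment:
  assumes "X \<in> borel_measurable M" "integrable M (\<lambda>\<omega>. (X \<omega>)\<^sup>2)"
  shows "(tail_second_moment M X \<longlongrightarrow> 0) at_top"
proof -
  have "((\<lambda>s. \<integral>\<omega>. (X \<omega>)\<^sup>2 * indicator {\<omega> \<in> space M. X \<omega> > s} \<omega> \<partial>M)
          \<longlongrightarrow> (\<integral>\<omega>. 0 \<partial>M)) at_top"
  proof (rule integral_dominated_convergence_at_top[OF _ _ assms(2)])
    show "(\<lambda>\<omega>. (X \<omega>)\<^sup>2 * indicator {\<omega> \<in> space M. X \<omega> > s} \<omega>) \<in> borel_measurable M" for s
      using assms(1) by measurable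
    show "AE \<omega> in M. ((\<lambda>s. (X \<omega>)\<^sup>2 * indicator {\<omega> \<in> space M. X \<omega> > s} \<omega>) \<longlongrightarrow> 0) at_top"
    proof (intro AE_I2 tendsto_eventually)
      fix \<omega>
      show "\<forall>\<^sub>F s in at_top. (X \<omega>)\<^sup>2 * indicator {\<omega> \<in> space M. X \<omega> > s} \<omega> = (0::real)"
        unfolding eventually_at_top_linorder
        by (rule exI[of _ "X \<omega>"]) (auto split: split_indicator)
    qed
  qed (auto split: split_indicator)
  then show ?thesis
    unfolding tail_second_moment_def by simp
qed

lemma (in finite_measure) sq_mult_measure_gt_le_tail_second_moment:
  assumes "X \<in> borel_measurable M" "integrable M (\<lambda>\<omega>. (X \<omega>)\<^sup>2)" "0 \<le> s"
  shows "s\<^sup>2 * measure M {\<omega> \<in> space M. X \<omega> > s} \<le> tail_second_moment M X s"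
proof -
  let ?A = "{\<omega> \<in> space M. X \<omega> > s}"
  have A: "?A \<in> sets M"
    using assms(1) by measurable
  have "s\<^sup>2 * measure M ?A = (\<integral>\<omega>. s\<^sup>2 * indicator ?A \<omega> \<partial>M)"
    using A by simp
  also have "\<dots> \<le> tail_second_moment M X s"
    unfolding tail_second_moment_def
    using A assms
    by (intro integral_mono integrable_tail_second_moment integrable_mult_right
        integrable_real_indicator)
      (auto simp: less_top[symmetric] split: split_indicator intro!: power_mono)
  finally show ?thesis .
qed

lemma measure_gt_eq_if_distr_eq:
  fixes s :: real
  assumes "X \<in> borel_measurable M" "Y \<in> borel_measurable M"
    and "distr M borel X = distr M borel Y"
  shows "measure M {\<omega> \<in> space M. X \<omega> > s} = measure M {\<omega> \<in> space M. Y \<omega> > s}"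
proof -
  have distr: "measure M {\<omega> \<in> space M. Z \<omega> > s} = measure (distr M borel Z) {s<..}"
    if "Z \<in> borel_measurable M" for Z :: "'a \<Rightarrow> real"
    using that by (subst measure_distr) (auto intro!: arg_cong[where f = "measure M"])
  show ?thesis
    unfolding distr[OF assms(1)] distr[OF assms(2)] assms(3) ..
qed

lemma (in prob_space) prob_Max_le_ge:
  fixes X :: "'i \<Rightarrow> 'a \<Rightarrow> real"
  assumes "finite I" "I \<noteq> {}" "\<And>i. i \<in> I \<Longrightarrow> X i \<in> borel_measurable M"
  shows "1 - (\<Sum>i\<in>I. prob {\<omega> \<in> space M. X i \<omega> > c})
    \<le> prob {\<omega> \<in> space M. Max ((\<lambda>i. X i \<omega>) ` I) \<le> c}"
proof -
  let ?A = "\<lambda>i. {\<omega> \<in> space M. X i \<omega> > c}"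
  have A: "?A i \<in> events" if "i \<in> I" for i
    using assms(3)[OF that] by measurable
  have "{\<omega> \<in> space M. Max ((\<lambda>i. X i \<omega>) ` I) \<le> c} = space M - (\<Union>i\<in>I. ?A i)"
    using assms(1,2) by (auto simp: Max_le_iff not_less)
  then have "prob {\<omega> \<in> space M. Max ((\<lambda>i. X i \<omega>) ` I) \<le> c} = 1 - prob (\<Union>i\<in>I. ?A i)"
    using A assms(1) by (simp add: prob_compl sets.finite_UN)
  moreover have "prob (\<Union>i\<in>I. ?A i) \<le> (\<Sum>i\<in>I. prob (?A i))"
    using A by (intro measure_UNION_le assms(1)) auto
  ultimately show ?thesis
    by linarith
qed

lemma filterlim_real_root_at_top:
  assumes "0 < n"
  shows "filterlim (root n) at_top at_top"
  unfolding filterlim_at_top eventually_at_top_linorder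
proof (intro allI exI[of _ "\<bar>_\<bar> ^ n"] impI)
  fix z y :: real assume y: "\<bar>z\<bar> ^ n \<le> y"
  have "z \<le> \<bar>z\<bar>"
    by simp
  also have "\<dots> = root n (\<bar>z\<bar> ^ n)"
    using assms by (rule real_root_pos_unique[symmetric]) auto
  also have "\<dots> \<le> root n y"
    using assms y by simp
  finally show "z \<le> root n y" .
qed

text \<open>The \<open>max 1\<close> keeps the threshold antitone near \<open>0\<close>, where \<open>1 / root 4 y\<close>
  would drop to the junk value \<open>1 / 0 = 0\<close>.\<close>

definition vanishing_threshold :: "(real \<Rightarrow> real) \<Rightarrow> real \<Rightarrow> real" where
  "vanishing_threshold g y = max (root 4 (g (root 4 (max 1 y)))) (1 / root 4 (max 1 y))"

lemma antimono_vanishing_threshold: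
  assumes "antimono g"
  shows "antimono (vanishing_threshold g)"
proof (rule antimonoI)
  fix x y :: real assume "x \<le> y"
  then have r: "root 4 (max 1 x) \<le> root 4 (max 1 y)"
    by simp
  then have "g (root 4 (max 1 y)) \<le> g (root 4 (max 1 x))"
    by (rule antimonoD[OF assms])
  moreover have "1 / root 4 (max 1 y) \<le> 1 / root 4 (max 1 x)"
    using r by (intro divide_left_mono) auto
  ultimately show "vanishing_threshold g y \<le> vanishing_threshold g x"
    unfolding vanishing_threshold_def by (intro max.mono) auto
qed

lemma tendsto_vanishing_threshold:
  assumes "(g \<longlongrightarrow> 0) at_top"
  shows "(vanishing_threshold g \<longlongrightarrow> 0) at_top"
proof -
  have r: "filterlim (\<lambda>y. root 4 (max 1 y)) at_top at_top"
    by (rule filterlim_at_top_mono[OF filterlim_real_root_at_top[of 4]]) auto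
  have "((\<lambda>y. root 4 (g (root 4 (max 1 y)))) \<longlongrightarrow> root 4 0) at_top"
    by (intro tendsto_real_root filterlim_compose[OF assms r])
  moreover have "((\<lambda>y. 1 / root 4 (max 1 y)) \<longlongrightarrow> 0) at_top"
    using tendsto_inverse_0_at_top[OF r] by (simp add: divide_inverse)
  ultimately have "(vanishing_threshold g \<longlongrightarrow> max (root 4 0) 0) at_top"
    unfolding vanishing_threshold_def by (rule tendsto_max)
  then show ?thesis
    by simp
qed

text \<open>The threshold is large enough both to push \<open>c = \<eta>(y) \<surd>y\<close> past \<open>root 4 y\<close>,
  and to absorb the factor \<open>\<eta>(y)\<^sup>2\<close> lost when dividing by \<open>c\<^sup>2 = \<eta>(y)\<^sup>2 y\<close>.\<close>

lemma vanishing_threshold_tail_bound: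
  assumes chebyshev: "\<And>s. 0 \<le> s \<Longrightarrow> s\<^sup>2 * Q s \<le> g s"
    and g: "antimono g" "\<And>s. 0 \<le> g s"
    and y: "1 \<le> y"
  shows "y * Q (vanishing_threshold g y * sqrt y) \<le> sqrt (g (root 4 y))"
proof -
  define r where "r = root 4 y"
  define a where "a = g r"
  define e where "e = vanishing_threshold g y"
  define c where "c = e * sqrt y"
  have r1: "1 \<le> r"
    unfolding r_def using y by simp
  have sqrt_y: "sqrt y = r\<^sup>2"
    unfolding sqrt_def r_def using y by (intro real_root_pos_unique) (auto simp flip: power_mult)
  have a0: "0 \<le> a"
    unfolding a_def by (rule g(2))
  have e: "1 / r \<le> e" "root 4 a \<le> e"
    unfolding e_def vanishing_threshold_def a_def r_def using y by auto
  have e0: "0 < e"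
    using e(1) r1 by (smt (verit) divide_pos_pos)
  have "r = (1 / r) * r\<^sup>2"
    using r1 by (simp add: power2_eq_square)
  also have "\<dots> \<le> c"
    unfolding c_def sqrt_y using e(1) by (intro mult_right_mono) auto
  finally have rc: "r \<le> c" .
  have "sqrt a = (root 4 a)\<^sup>2"
    unfolding sqrt_def using a0 by (intro real_root_pos_unique) (auto simp flip: power_mult)
  also have "\<dots> \<le> e\<^sup>2"
    using e(2) a0 by (intro power_mono) auto
  finally have sqrt_a: "sqrt a \<le> e\<^sup>2" .
  have "e\<^sup>2 * (y * Q c) = c\<^sup>2 * Q c"
    unfolding c_def using y by (simp add: power_mult_distrib)
  also have "\<dots> \<le> g c"
    using chebyshev rc r1 by simp
  also have "\<dots> \<le> a"
    unfolding a_def using g(1) rc by (rule antimonoD)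
  also have "\<dots> = sqrt a * sqrt a"
    using a0 by simp
  also have "\<dots> \<le> e\<^sup>2 * sqrt a"
    using sqrt_a a0 by (intro mult_right_mono) auto
  finally have "y * Q c \<le> sqrt a"
    using e0 by simp
  then show ?thesis
    unfolding c_def e_def a_def r_def .
qed

theorem lemma3:
  fixes M :: "'a measure" and U :: "nat \<Rightarrow> 'a \<Rightarrow> real"
    and \<beta> x0 :: real
  assumes "prob_space M"
    and rv: "\<And>i. U i \<in> borel_measurable M"
    and indep: "prob_space.indep_vars M (\<lambda>_. borel) U UNIV"
    and ident: "\<And>i. distr M borel (U i) = distr M borel (U 0)"
    and pos: "\<And>i. AE \<omega> in M. U i \<omega> > 0"
    and L2: "integrable M (\<lambda>\<omega>. (U 0 \<omega>)\<^sup>2)"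
    and beta: "0 < \<beta>" "\<beta> < 1/2"
    and x0: "x0 > 0" "x0 \<in> interior (rv_support M (U 0))"
    and cvx: "convex_on {x0..} (\<lambda>x. (measure M {\<omega> \<in> space M. U 0 \<omega> > x}) powr (1/2 - \<beta>))"
  shows "\<exists>\<eta> :: real \<Rightarrow> real. antimono_on {0..} \<eta> \<and> (\<eta> \<longlongrightarrow> 0) at_top \<and>
    (\<lambda>N. measure M {\<omega> \<in> space M.
        Max ((\<lambda>i. U i \<omega>) ` {1..N}) / sqrt (real N) \<le> \<eta> (real N)}) \<longlonglongrightarrow> 1"
proof -
  interpret prob_space M by fact
  define g where "g = tail_second_moment M (U 0)"
  define \<eta> where "\<eta> = vanishing_threshold g"
  define Q where "Q s = prob {\<omega> \<in> space M. U 0 \<omega> > s}" for s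
  have g: "antimono g" "(g \<longlongrightarrow> 0) at_top" "\<And>s. 0 \<le> g s"
      "\<And>s. 0 \<le> s \<Longrightarrow> s\<^sup>2 * Q s \<le> g s"
    unfolding g_def Q_def using rv L2
    by (auto intro: antimono_tail_second_moment tendsto_tail_second_moment
        tail_second_moment_nonneg sq_mult_measure_gt_le_tail_second_moment)
  have Q: "prob {\<omega> \<in> space M. U i \<omega> > s} = Q s" for i s
    unfolding Q_def by (rule measure_gt_eq_if_distr_eq[OF rv rv ident])
  let ?P = "\<lambda>N. prob {\<omega> \<in> space M. Max ((\<lambda>i. U i \<omega>) ` {1..N}) / sqrt (real N) \<le> \<eta> (real N)}"
  have lower: "1 - sqrt (g (root 4 (real N))) \<le> ?P N" if N: "1 \<le> N" for N
  proof -
    have "1 - real N * Q (\<eta> (real N) * sqrt (real N))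
        \<le> prob {\<omega> \<in> space M. Max ((\<lambda>i. U i \<omega>) ` {1..N}) \<le> \<eta> (real N) * sqrt (real N)}"
      using prob_Max_le_ge[of "{1..N}" U] N rv by (simp add: Q)
    also have "\<dots> = ?P N"
      using N by (simp add: pos_divide_le_eq)
    moreover have "real N * Q (\<eta> (real N) * sqrt (real N)) \<le> sqrt (g (root 4 (real N)))"
      unfolding \<eta>_def using g N by (intro vanishing_threshold_tail_bound) auto
    ultimately show ?thesis
      by linarith
  qed
  have "((\<lambda>N. g (root 4 (real N))) \<longlongrightarrow> 0) sequentially"
    using filterlim_compose[OF g(2)
        filterlim_compose[OF filterlim_real_root_at_top[of 4] filterlim_real_sequentially]]
    by simp
  then have lim: "(\<lambda>N. 1 - sqrt (g (root 4 (real N)))) \<longlonglongrightarrow> 1"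
    using tendsto_diff[OF tendsto_const[of 1] tendsto_real_sqrt] by fastforce
  have "?P \<longlonglongrightarrow> 1"
    by (rule tendsto_sandwich[OF _ _ lim tendsto_const])
      (use lower in \<open>auto simp: eventually_sequentially\<close>)
  moreover have "antimono_on {0..} \<eta>"
    unfolding \<eta>_def using antimono_vanishing_threshold[OF g(1)] by (rule monotone_on_subset) simp
  ultimately show ?thesis
    using tendsto_vanishing_threshold[OF g(2)] unfolding \<eta>_def by blast
qed

end
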